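(* If $\{(0,1),(1,1)\}\subset\mathcal{Z}_0$, then $S_\infty=\mathbb{L}^2$.
   Context: $\mathbb{L}^2=\{w\in L^2([0,2\pi]^2_{\mathrm{per}};\mathbb{R}):\int w\,dx=0\}$. $\mathbb{Z}^2_+=\{(j_1,j_2)\in\mathbb{Z}^2:j_2>0\}\cup\{(j_1,0):j_1>0\}$, $\mathbb{Z}^2_-=-\mathbb{Z}^2_+$, $\mathbb{Z}^2_0=\mathbb{Z}^2_+\cup\mathbb{Z}^2_-$; $e_k(x)=\sin(k\cdot x)$ for $k\in\mathbb{Z}^2_+$, $e_k(x)=\cos(k\cdot x)$ for $k\in\mathbb{Z}^2_-$. Given a finite set $\mathcal{Z}_*\subset\mathbb{Z}^2_0$ (the forced modes), define $\mathcal{Z}_0=\mathcal{Z}_*\cap(-\mathcal{Z}_* )$, for $n\ge1$ $\mathcal{Z}_n=\{\ell+j\in\mathbb{Z}^2_0: j\in\mathcal{Z}_0,\ \ell\in\mathcal{Z}_{n-1},\ \ell^\perp\cdot j\neq0,\ |j|\neq|\ell|\}$ where $\ell^\perp=(-\ell_2,\ell_1)$ and $|\cdot|$ is the Euclidean norm, $\mathcal{Z}_\infty=\bigcup_{n\ge1}\mathcal{Z}_n$, and $S_\infty$ the closed linear span in $\mathbb{L}^2$ of $\{e_k:k\in\mathcal{Z}_\infty\cup\mathcal{Z}_*\}$. *)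

theory Defs
  imports "HOL-Analysis.Analysis"
begin

type_synonym lattice_pt = "int \<times> int"

definition Zplus :: "lattice_pt set" where
  "Zplus = {(j1, j2). j2 > 0} \<union> {(j1, j2). j2 = 0 \<and> j1 > 0}"

definition Zminus :: "lattice_pt set" where
  "Zminus = uminus ` Zplus"

definition Zzero :: "lattice_pt set" where
  "Zzero = Zplus \<union> Zminus"

definition perp :: "lattice_pt \<Rightarrow> lattice_pt" where
  "perp l = (- snd l, fst l)"

definition idot :: "lattice_pt \<Rightarrow> lattice_pt \<Rightarrow> int" where
  "idot a b = fst a * fst b + snd a * snd b"

definition inorm :: "lattice_pt \<Rightarrow> real" where
  "inorm k = sqrt (real_of_int (fst k ^ 2 + snd k ^ 2))"

definition ek :: "lattice_pt \<Rightarrow> real \<times> real \<Rightarrow> real" where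
  "ek k x = (let t = real_of_int (fst k) * fst x + real_of_int (snd k) * snd x
             in if k \<in> Zplus then sin t else cos t)"

definition Z0 :: "lattice_pt set \<Rightarrow> lattice_pt set" where
  "Z0 Zs = Zs \<inter> uminus ` Zs"

primrec Zn :: "lattice_pt set \<Rightarrow> nat \<Rightarrow> lattice_pt set" where
  "Zn Zs 0 = Z0 Zs"
| "Zn Zs (Suc n) = {l + j | l j. l + j \<in> Zzero \<and> j \<in> Z0 Zs \<and> l \<in> Zn Zs n
                        \<and> idot (perp l) j \<noteq> 0 \<and> inorm j \<noteq> inorm l}"

definition Zinf :: "lattice_pt set \<Rightarrow> lattice_pt set" where
  "Zinf Zs = (\<Union>n\<in>{1..}. Zn Zs n)"

definition torus_box :: "(real \<times> real) set" where
  "torus_box = {0..2*pi} \<times> {0..2*pi}"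

definition L2zero :: "(real \<times> real \<Rightarrow> real) set" where
  "L2zero = {w. set_borel_measurable lebesgue torus_box w
               \<and> set_integrable lebesgue torus_box (\<lambda>x. (w x)^2)
               \<and> (LINT x:torus_box|lebesgue. w x) = 0}"

definition L2_closed_span :: "lattice_pt set \<Rightarrow> (real \<times> real \<Rightarrow> real) set" where
  "L2_closed_span K = {f \<in> L2zero. \<forall>\<epsilon>>0. \<exists>F c. finite F \<and> F \<subseteq> K \<and>
        (LINT x:torus_box|lebesgue. (f x - (\<Sum>k\<in>F. c k * ek k x))^2) < \<epsilon>}"

definition S_infty :: "lattice_pt set \<Rightarrow> (real \<times> real \<Rightarrow> real) set" where
  "S_infty Zs = L2_closed_span (Zinf Zs \<union> Zs)"

end

theory Submission
  imports Defs
begin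

text \<open>Combinatorics: since \<open>(0, 1)\<close> and \<open>(1, 1)\<close> lie in \<open>Z\<^sub>0\<close> together with their negatives,
  starting from \<open>(1, 0) \<in> Z\<^sub>1\<close> one may step by \<open>\<plusminus>(0, 1)\<close> away from the line \<open>x = 0\<close> and the
  unit circle, and by \<open>\<plusminus>(1, 1)\<close> away from the diagonal and the circle of radius \<open>\<surd>2\<close>.
  This reaches the whole line \<open>x = 2\<close>, from there every diagonal \<open>x - y = d\<close> with
  \<open>d \<notin> {0, 2, -2}\<close>, and finally the remaining nonzero points, so \<open>Z\<^sub>\<infinity>\<close> contains every nonzero mode.

  Analysis: the \<open>e\<^sub>k\<close> with \<open>k \<noteq> 0\<close> span a dense subspace of the mean-zero functions in \<open>L\<^sup>2\<close>
  of the torus. A square-integrable function is approximated by a bounded one (clipping), that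
  one by a continuous function vanishing on the edges of the box (a.e. approximation by
  continuous functions, cut-offs and dominated convergence), which is continuous on the torus
  and hence a uniform limit of polynomials in \<open>cos x\<^sub>1, sin x\<^sub>1, cos x\<^sub>2, sin x\<^sub>2\<close>
  (Stone--Weierstrass), i.e. of trigonometric polynomials. Their constant term can be dropped
  because the approximated function has mean zero.\<close>

section \<open>Reaching all nonzero lattice points\<close>

lemma Zplus_iff: "(a, b) \<in> Zplus \<longleftrightarrow> b > 0 \<or> (b = 0 \<and> a > 0)"
  by (auto simp: Zplus_def)

lemma Zminus_iff: "(a, b) \<in> Zminus \<longleftrightarrow> b < 0 \<or> (b = 0 \<and> a < 0)"
proof -
  have "(a, b) \<in> Zminus \<longleftrightarrow> (-a, -b) \<in> Zplus"
    unfolding Zminus_def by (force simp: image_iff)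
  then show ?thesis
    by (auto simp: Zplus_iff)
qed

lemma Zzero_iff: "k \<in> Zzero \<longleftrightarrow> k \<noteq> 0"
  by (cases k) (auto simp: Zzero_def Zplus_iff Zminus_iff zero_prod_def)

lemma uminus_Zplus_iff: "k \<noteq> 0 \<Longrightarrow> - k \<in> Zplus \<longleftrightarrow> k \<notin> Zplus"
  by (cases k) (auto simp: Zplus_iff zero_prod_def)

lemma inorm_eq_iff: "inorm a = inorm b \<longleftrightarrow> fst a ^ 2 + snd a ^ 2 = fst b ^ 2 + snd b ^ 2"
  unfolding inorm_def by (simp del: of_int_add of_int_power)

lemma Z0_uminus: "j \<in> Z0 Zs \<Longrightarrow> - j \<in> Z0 Zs"
  by (force simp: Z0_def)

lemma Zn_add_mem_Zinf:
  assumes "l \<in> Zn Zs n" "j \<in> Z0 Zs" "l + j \<noteq> 0" "idot (perp l) j \<noteq> 0" "inorm j \<noteq> inorm l"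
  shows "l + j \<in> Zinf Zs"
proof -
  have "l + j \<in> Zzero"
    using assms(3) by (simp add: Zzero_iff)
  then have "l + j \<in> Zn Zs (Suc n)"
    unfolding Zn.simps using assms by blast
  then show ?thesis
    unfolding Zinf_def by (intro UN_I[of "Suc n"]) auto
qed

lemma Zinf_add:
  assumes "l \<in> Zinf Zs" "j \<in> Z0 Zs" "l + j \<noteq> 0" "idot (perp l) j \<noteq> 0" "inorm j \<noteq> inorm l"
  shows "l + j \<in> Zinf Zs"
proof -
  obtain n where "l \<in> Zn Zs n"
    using assms(1) by (auto simp: Zinf_def)
  then show ?thesis
    using Zn_add_mem_Zinf assms(2-) by blast
qed

lemma int_small_sum_squares:
  fixes a b :: int
  assumes "a\<^sup>2 + b\<^sup>2 \<le> 2"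
  shows "a \<in> {-1, 0, 1}" "b \<in> {-1, 0, 1}"
proof -
  have "\<bar>c\<bar> \<le> 1" if "c\<^sup>2 \<le> 2" for c :: int
  proof (rule ccontr)
    assume "\<not> \<bar>c\<bar> \<le> 1"
    then have "2\<^sup>2 \<le> \<bar>c\<bar>\<^sup>2"
      by (intro power_mono) auto
    then show False
      using that by simp
  qed
  moreover have "a\<^sup>2 \<le> 2" "b\<^sup>2 \<le> 2"
    using assms zero_le_power2[of a] zero_le_power2[of b] by linarith+
  ultimately have "\<bar>a\<bar> \<le> 1" "\<bar>b\<bar> \<le> 1"
    by blast+
  then show "a \<in> {-1, 0, 1}" "b \<in> {-1, 0, 1}"
    by auto
qed

lemma int_sum_squares_eq_two:
  fixes a b :: int
  assumes "a\<^sup>2 + b\<^sup>2 = 2"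
  shows "a - b \<in> {0, 2, -2}"
proof -
  have "a \<in> {-1, 0, 1}" "b \<in> {-1, 0, 1}"
    using int_small_sum_squares[of a b] assms by auto
  then show ?thesis
    using assms by auto
qed

context
  fixes Zs :: "lattice_pt set"
  assumes generators: "{(0, 1), (1, 1)} \<subseteq> Z0 Zs"
begin

lemma Zinf_vertical_steps:
  assumes "(a, b) \<in> Zinf Zs" "a \<noteq> 0" "a\<^sup>2 + b\<^sup>2 \<noteq> 1"
  shows "(a, b + 1) \<in> Zinf Zs" "(a, b - 1) \<in> Zinf Zs"
proof -
  have "(0, 1) \<in> Z0 Zs" "(0, -1) \<in> Z0 Zs"
    using generators Z0_uminus[of "(0, 1)"] by auto
  then show "(a, b + 1) \<in> Zinf Zs" "(a, b - 1) \<in> Zinf Zs"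
    using Zinf_add[OF assms(1)] assms(2,3)
    by (fastforce simp: idot_def perp_def inorm_eq_iff zero_prod_def)+
qed

lemma Zinf_diagonal_steps:
  assumes "(a, b) \<in> Zinf Zs" "a \<noteq> b" "a\<^sup>2 + b\<^sup>2 \<noteq> 2"
  shows "(a + 1, b + 1) \<in> Zinf Zs" "(a - 1, b - 1) \<in> Zinf Zs"
proof -
  have "(1, 1) \<in> Z0 Zs" "(-1, -1) \<in> Z0 Zs"
    using generators Z0_uminus[of "(1, 1)"] by auto
  then show "(a + 1, b + 1) \<in> Zinf Zs" "(a - 1, b - 1) \<in> Zinf Zs"
    using Zinf_add[OF assms(1)] assms(2,3)
    by (fastforce simp: idot_def perp_def inorm_eq_iff zero_prod_def algebra_simps)+
qed

lemma mem_Zinf_one_zero: "(1, 0) \<in> Zinf Zs"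
proof -
  have "(1, 1) \<in> Zn Zs 0" "(0, -1) \<in> Z0 Zs"
    using generators Z0_uminus[of "(0, 1)"] by auto
  from Zn_add_mem_Zinf[OF this] show ?thesis
    by (simp add: idot_def perp_def inorm_eq_iff zero_prod_def)
qed

lemma mem_Zinf_first_two: "(2, y) \<in> Zinf Zs"
proof (induction y rule: int_induct[where k = 1])
  case base
  show ?case
    using Zinf_diagonal_steps(1)[OF mem_Zinf_one_zero] by simp
next
  case (step1 i)
  have "2\<^sup>2 + i\<^sup>2 \<noteq> 1"
    using zero_le_power2[of i] by (simp, linarith)
  with step1 show ?case
    using Zinf_vertical_steps(1)[of 2 i] by simp
next
  case (step2 i)
  have "2\<^sup>2 + i\<^sup>2 \<noteq> 1"
    using zero_le_power2[of i] by (simp, linarith)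
  with step2 show ?case
    using Zinf_vertical_steps(2)[of 2 i] by simp
qed

lemma mem_Zinf_off_diagonals:
  assumes "x - y \<notin> {0, 2, -2}"
  shows "(x, y) \<in> Zinf Zs"
proof -
  define d where "d = x - y"
  have "a\<^sup>2 + (a - d)\<^sup>2 \<noteq> 2" for a
    using int_sum_squares_eq_two[of a "a - d"] assms by (auto simp: d_def)
  then have "(a, a - d) \<in> Zinf Zs" for a
  proof (induction a rule: int_induct[where k = 2])
    case base
    show ?case by (rule mem_Zinf_first_two)
  next
    case (step1 i)
    then show ?case
      using Zinf_diagonal_steps(1)[of i "i - d"] assms by (auto simp: d_def algebra_simps)
  next
    case (step2 i)
    then show ?case
      using Zinf_diagonal_steps(2)[of i "i - d"] assms by (auto simp: d_def algebra_simps)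
  qed
  from this[of x] show ?thesis
    by (simp add: d_def)
qed

lemma mem_Zinf_first_nonzero:
  assumes "x \<noteq> 0"
  shows "(x, y) \<in> Zinf Zs"
proof (cases "x - y \<in> {0, 2, -2}")
  case False
  then show ?thesis by (rule mem_Zinf_off_diagonals)
next
  case True
  show ?thesis
  proof (cases "y = 1 \<and> \<bar>x\<bar> = 1")
    case False
    have "x\<^sup>2 + (y - 1)\<^sup>2 \<noteq> 1"
      using int_small_sum_squares[of x "y - 1"] assms False by auto
    then show ?thesis
      using Zinf_vertical_steps(1)[of x "y - 1"] mem_Zinf_off_diagonals[of x "y - 1"] True assms
      by auto
  next
    case True
    then have "x - (y + 1) \<notin> {0, 2, -2}" "x\<^sup>2 + (y + 1)\<^sup>2 \<noteq> 1"
      by (auto simp: abs_if split: if_splits)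
    then show ?thesis
      using Zinf_vertical_steps(2)[of x "y + 1"] mem_Zinf_off_diagonals[of x "y + 1"] True
      by auto
  qed
qed

lemma mem_Zinf_first_zero:
  assumes "y \<noteq> 0"
  shows "(0, y) \<in> Zinf Zs"
proof (cases "y = 2")
  case True
  then show ?thesis
    using Zinf_diagonal_steps(2)[OF mem_Zinf_first_nonzero[of 1 3]] by simp
next
  case False
  have "1 + (y - 1)\<^sup>2 \<noteq> 2"
    using int_small_sum_squares[of 1 "y - 1"] assms False by auto
  then show ?thesis
    using Zinf_diagonal_steps(1)[OF mem_Zinf_first_nonzero[of "-1" "y - 1"]] assms by simp
qed

lemma Zzero_subset_Zinf: "Zzero \<subseteq> Zinf Zs"
proof
  fix k assume "k \<in> Zzero"
  then show "k \<in> Zinf Zs"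
    using mem_Zinf_first_nonzero mem_Zinf_first_zero
    by (cases k; cases "fst k = 0") (auto simp: Zzero_iff zero_prod_def)
qed

end

section \<open>Square-integrable functions on a set\<close>

definition square_integrable_on :: "'a measure \<Rightarrow> 'a set \<Rightarrow> ('a \<Rightarrow> real) \<Rightarrow> bool" where
  "square_integrable_on M A u \<longleftrightarrow>
     set_borel_measurable M A u \<and> set_integrable M A (\<lambda>x. (u x)\<^sup>2)"

abbreviation sq_norm_on :: "'a measure \<Rightarrow> 'a set \<Rightarrow> ('a \<Rightarrow> real) \<Rightarrow> real" where
  "sq_norm_on M A u \<equiv> LINT x:A|M. (u x)\<^sup>2"

lemma square_sum_le: "(x + y)\<^sup>2 \<le> 2 * x\<^sup>2 + 2 * (y :: real)\<^sup>2"
  using sum_squares_bound[of x y] by (simp add: power2_sum)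

lemma set_borel_measurable_compose_continuous:
  fixes f :: "'a \<Rightarrow> real" and g :: "real \<Rightarrow> real"
  assumes "set_borel_measurable M A f" "continuous_on UNIV g" "g 0 = 0"
  shows "set_borel_measurable M A (\<lambda>x. g (f x))"
proof -
  have "(\<lambda>x. indicator A x *\<^sub>R g (f x)) = (\<lambda>x. g (indicator A x *\<^sub>R f x))"
    using assms(3) by (auto simp: indicator_def)
  moreover have "g \<in> borel_measurable borel"
    using assms(2) by (rule borel_measurable_continuous_onI)
  ultimately show ?thesis
    using assms(1) measurable_compose[of _ M borel g] unfolding set_borel_measurable_def by simp
qed

lemma set_borel_measurable_diff:
  fixes f g :: "'a \<Rightarrow> real"
  assumes "set_borel_measurable M A f" "set_borel_measurable M A g"
  shows "set_borel_measurable M A (\<lambda>x. f x - g x)"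
proof -
  have "(\<lambda>x. indicator A x *\<^sub>R (f x - g x)) = (\<lambda>x. indicator A x *\<^sub>R f x - indicator A x *\<^sub>R g x)"
    by (simp add: algebra_simps)
  then show ?thesis
    using assms unfolding set_borel_measurable_def by simp
qed

lemma set_integrable_const:
  assumes "A \<in> sets M" "emeasure M A < \<infinity>"
  shows "set_integrable M A (\<lambda>_. c :: real)"
  using assms unfolding set_integrable_def by (simp add: integrable_mult_left)

lemma set_integrable_bounded:
  fixes f :: "'a \<Rightarrow> real"
  assumes "A \<in> sets M" "emeasure M A < \<infinity>"
    and "set_borel_measurable M A f" "\<And>x. x \<in> A \<Longrightarrow> \<bar>f x\<bar> \<le> C"
  shows "set_integrable M A f"
proof (rule set_integrable_bound)
  show "set_integrable M A (\<lambda>_. C)"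
    using assms(1,2) by (rule set_integrable_const)
  show "AE x in M. x \<in> A \<longrightarrow> norm (f x) \<le> norm C"
    using assms(4) by (intro AE_I2) force
qed (rule assms(3))

lemma set_borel_measurable_square:
  fixes u :: "'a \<Rightarrow> real"
  shows "set_borel_measurable M A u \<Longrightarrow> set_borel_measurable M A (\<lambda>x. (u x)\<^sup>2)"
  by (rule set_borel_measurable_compose_continuous) (auto intro: continuous_intros)

lemma square_integrable_on_bounded:
  fixes u :: "'a \<Rightarrow> real"
  assumes "A \<in> sets M" "emeasure M A < \<infinity>"
    and "set_borel_measurable M A u" "\<And>x. x \<in> A \<Longrightarrow> \<bar>u x\<bar> \<le> C"
  shows "square_integrable_on M A u" "sq_norm_on M A u \<le> C\<^sup>2 * measure M A"
proof -
  have sq_le: "(u x)\<^sup>2 \<le> C\<^sup>2" if "x \<in> A" for x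
    using power_mono[OF assms(4)[OF that] abs_ge_zero, of 2] by simp
  have sq: "set_integrable M A (\<lambda>x. (u x)\<^sup>2)"
    by (rule set_integrable_bounded[OF assms(1,2) set_borel_measurable_square[OF assms(3)]])
      (use sq_le in simp)
  with assms(3) show "square_integrable_on M A u"
    by (simp add: square_integrable_on_def)
  have "sq_norm_on M A u \<le> (LINT x:A|M. C\<^sup>2)"
    using sq set_integrable_const[OF assms(1,2)] sq_le by (rule set_integral_mono)
  also have "\<dots> = C\<^sup>2 * measure M A"
    using assms(1,2) by (simp add: set_integral_const)
  finally show "sq_norm_on M A u \<le> C\<^sup>2 * measure M A" .
qed

lemma square_integrable_on_imp_set_integrable:
  fixes u :: "'a \<Rightarrow> real"
  assumes "A \<in> sets M" "emeasure M A < \<infinity>" "square_integrable_on M A u"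
  shows "set_integrable M A u"
proof (rule set_integrable_bound)
  have "\<bar>y\<bar> \<le> 1 + y\<^sup>2" for y :: real
    using sum_squares_bound[of "\<bar>y\<bar>" 1] by simp
  then show "AE x in M. x \<in> A \<longrightarrow> norm (u x) \<le> norm (1 + (u x)\<^sup>2)"
    by (intro AE_I2) auto
  show "set_integrable M A (\<lambda>x. 1 + (u x)\<^sup>2)"
    using set_integrable_const[OF assms(1,2)] assms(3)
    by (intro set_integral_add) (auto simp: square_integrable_on_def)
qed (use assms(3) in \<open>simp add: square_integrable_on_def\<close>)

lemma square_integrable_on_diff:
  fixes u v :: "'a \<Rightarrow> real"
  assumes "square_integrable_on M A u" "square_integrable_on M A v"
  shows "square_integrable_on M A (\<lambda>x. u x - v x)"
proof -
  have m: "set_borel_measurable M A (\<lambda>x. u x - v x)"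
    using assms by (auto simp: square_integrable_on_def intro: set_borel_measurable_diff)
  have i: "set_integrable M A (\<lambda>x. 2 * (u x)\<^sup>2 + 2 * (v x)\<^sup>2)"
    using assms unfolding square_integrable_on_def by (intro set_integral_add set_integrable_mult_right) auto
  have "(a - b)\<^sup>2 \<le> 2 * a\<^sup>2 + 2 * b\<^sup>2" for a b :: real
    using square_sum_le[of a "- b"] by simp
  then have "set_integrable M A (\<lambda>x. (u x - v x)\<^sup>2)"
    by (intro set_integrable_bound[OF i set_borel_measurable_square[OF m]] AE_I2) auto
  with m show ?thesis
    by (simp add: square_integrable_on_def)
qed

lemma sq_norm_on_diff_le:
  fixes u v w :: "'a \<Rightarrow> real"
  assumes "square_integrable_on M A u" "square_integrable_on M A v" "square_integrable_on M A w"
  shows "sq_norm_on M A (\<lambda>x. u x - w x)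
           \<le> 2 * sq_norm_on M A (\<lambda>x. u x - v x) + 2 * sq_norm_on M A (\<lambda>x. v x - w x)"
proof -
  have sq: "set_integrable M A (\<lambda>x. (f x - g x)\<^sup>2)"
    if "square_integrable_on M A f" "square_integrable_on M A g" for f g
    using square_integrable_on_diff[OF that] by (simp add: square_integrable_on_def)
  have "(a - c)\<^sup>2 \<le> 2 * (a - b)\<^sup>2 + 2 * (b - c)\<^sup>2" for a b c :: real
    using square_sum_le[of "a - b" "b - c"] by simp
  then have "sq_norm_on M A (\<lambda>x. u x - w x)
               \<le> (LINT x:A|M. 2 * (u x - v x)\<^sup>2 + 2 * (v x - w x)\<^sup>2)"
    using sq assms by (intro set_integral_mono set_integral_add set_integrable_mult_right) auto
  also have "\<dots> = 2 * sq_norm_on M A (\<lambda>x. u x - v x) + 2 * sq_norm_on M A (\<lambda>x. v x - w x)"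
    using sq assms by (simp add: set_integral_add set_integrable_mult_right)
  finally show ?thesis .
qed

lemma sq_norm_on_le_diff_const:
  fixes g :: "'a \<Rightarrow> real"
  assumes "A \<in> sets M" "emeasure M A < \<infinity>" "square_integrable_on M A g"
    and "(LINT x:A|M. g x) = 0"
  shows "sq_norm_on M A g \<le> sq_norm_on M A (\<lambda>x. g x - c)"
proof -
  have g: "set_integrable M A g"
    using square_integrable_on_imp_set_integrable[OF assms(1-3)] .
  have g2: "set_integrable M A (\<lambda>x. (g x)\<^sup>2)"
    using assms(3) by (simp add: square_integrable_on_def)
  have rest: "set_integrable M A (\<lambda>x. c\<^sup>2 - 2 * c * g x)"
    using set_integrable_const[OF assms(1,2)] g by (intro set_integral_diff set_integrable_mult_right)
  have "sq_norm_on M A (\<lambda>x. g x - c) = (LINT x:A|M. (g x)\<^sup>2 + (c\<^sup>2 - 2 * c * g x))"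
    by (simp add: power2_diff algebra_simps)
  also have "\<dots> = sq_norm_on M A g + (LINT x:A|M. c\<^sup>2 - 2 * c * g x)"
    using g2 rest by (rule set_integral_add)
  also have "(LINT x:A|M. c\<^sup>2 - 2 * c * g x) = c\<^sup>2 * measure M A"
    using set_integrable_const[OF assms(1,2)] set_integrable_mult_right[OF g] assms
    by (simp add: set_integral_diff set_integral_const set_integral_mult_right)
  finally show ?thesis
    by simp
qed

lemma LIMSEQ_zero_ex_less:
  fixes X :: "nat \<Rightarrow> real"
  assumes "X \<longlonglongrightarrow> 0" "0 < e"
  obtains n where "X n < e"
proof -
  have "eventually (\<lambda>n. X n < e) sequentially"
    using assms by (rule order_tendstoD(2))
  then show ?thesis
    using that by (auto simp: eventually_sequentially)
qed

lemma sq_norm_on_dominated_convergence: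
  fixes u :: "nat \<Rightarrow> 'a \<Rightarrow> real" and v w :: "'a \<Rightarrow> real"
  assumes "\<And>n. set_borel_measurable M A (u n)" "set_borel_measurable M A v"
    and "square_integrable_on M A w"
    and "\<And>n x. x \<in> A \<Longrightarrow> \<bar>u n x\<bar> \<le> w x" "\<And>x. x \<in> A \<Longrightarrow> \<bar>v x\<bar> \<le> w x"
    and "AE x in M. x \<in> A \<longrightarrow> (\<lambda>n. u n x) \<longlonglongrightarrow> v x"
  shows "(\<lambda>n. sq_norm_on M A (\<lambda>x. v x - u n x)) \<longlonglongrightarrow> 0"
proof -
  let ?s = "\<lambda>n x. indicator A x *\<^sub>R (v x - u n x)\<^sup>2"
  let ?w = "\<lambda>x. indicator A x *\<^sub>R (4 * (w x)\<^sup>2)"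
  have "(\<lambda>n. integral\<^sup>L M (?s n)) \<longlonglongrightarrow> integral\<^sup>L M (\<lambda>_. 0 :: real)"
  proof (rule integral_dominated_convergence[where w = ?w])
    show "?s n \<in> borel_measurable M" for n
      using set_borel_measurable_square[OF set_borel_measurable_diff[OF assms(2,1)]]
      unfolding set_borel_measurable_def .
    have "integrable M (\<lambda>x. 4 * (indicator A x *\<^sub>R (w x)\<^sup>2))"
      using assms(3) unfolding square_integrable_on_def set_integrable_def
      by (intro integrable_mult_right) auto
    then show "integrable M ?w"
      by (simp add: mult.left_commute)
    show "AE x in M. (\<lambda>n. ?s n x) \<longlonglongrightarrow> 0"
      using assms(6)
    proof eventually_elim
      case (elim x)
      then show ?case
        by (cases "x \<in> A") (auto intro: tendsto_eq_intros)
    qed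
    have "(v x - u n x)\<^sup>2 \<le> (2 * w x)\<^sup>2" if "x \<in> A" for n x
    proof -
      have "\<bar>v x - u n x\<bar> \<le> \<bar>2 * w x\<bar>"
        using assms(4)[OF that, of n] assms(5)[OF that] by arith
      then show ?thesis
        by (simp only: abs_le_square_iff)
    qed
    then show "AE x in M. norm (?s n x) \<le> ?w x" for n
      by (intro AE_I2) (simp add: indicator_def power_mult_distrib)
  qed simp
  then show ?thesis
    unfolding set_lebesgue_integral_def by simp
qed

definition clip :: "real \<Rightarrow> real \<Rightarrow> real" where
  "clip C y = max (- C) (min C y)"

lemma continuous_on_clip: "continuous_on S (clip C)"
  unfolding clip_def by (intro continuous_intros)

lemma clip_abs_le: "0 \<le> C \<Longrightarrow> \<bar>clip C y\<bar> \<le> C" "0 \<le> C \<Longrightarrow> \<bar>clip C y\<bar> \<le> \<bar>y\<bar>"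
  by (auto simp: clip_def)

lemma clip_eq_self: "\<bar>y\<bar> \<le> C \<Longrightarrow> clip C y = y"
  by (auto simp: clip_def)

lemma clip_zero: "0 \<le> C \<Longrightarrow> clip C 0 = 0"
  by (simp add: clip_def)

lemma set_borel_measurable_clip:
  "0 \<le> C \<Longrightarrow> set_borel_measurable M A f \<Longrightarrow> set_borel_measurable M A (\<lambda>x. clip C (f x))"
  by (rule set_borel_measurable_compose_continuous[OF _ continuous_on_clip clip_zero])

lemma square_integrable_on_clip_approx:
  assumes f: "square_integrable_on M A f" and e: "0 < e"
  obtains C where "0 \<le> C" "sq_norm_on M A (\<lambda>x. f x - clip C (f x)) < e"
proof -
  have fm: "set_borel_measurable M A f"
    using f by (simp add: square_integrable_on_def)
  have "(\<lambda>n. sq_norm_on M A (\<lambda>x. f x - clip (real n) (f x))) \<longlonglongrightarrow> 0"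
  proof (rule sq_norm_on_dominated_convergence)
    show "square_integrable_on M A (\<lambda>x. \<bar>f x\<bar>)"
      using f set_borel_measurable_compose_continuous[OF fm continuous_on_rabs[OF continuous_on_id]]
      by (simp add: square_integrable_on_def)
    show "AE x in M. x \<in> A \<longrightarrow> (\<lambda>n. clip (real n) (f x)) \<longlonglongrightarrow> f x"
    proof (intro AE_I2 impI)
      fix x
      obtain N :: nat where "\<bar>f x\<bar> \<le> real N"
        using real_arch_simple by blast
      then have "\<forall>n\<ge>N. clip (real n) (f x) = f x"
        by (auto intro!: clip_eq_self)
      then show "(\<lambda>n. clip (real n) (f x)) \<longlonglongrightarrow> f x"
        by (intro tendsto_eventually) (auto simp: eventually_sequentially)
    qed
    show "set_borel_measurable M A (\<lambda>x. clip (real n) (f x))" for n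
      using fm by (simp add: set_borel_measurable_clip)
  qed (use fm clip_abs_le in auto)
  then obtain n where "sq_norm_on M A (\<lambda>x. f x - clip (real n) (f x)) < e"
    using e by (rule LIMSEQ_zero_ex_less)
  then show ?thesis
    using that[of "real n"] by simp
qed

section \<open>Trigonometric polynomials on the torus\<close>

definition lattice_inner :: "lattice_pt \<Rightarrow> real \<times> real \<Rightarrow> real" where
  "lattice_inner k x = of_int (fst k) * fst x + of_int (snd k) * snd x"

lemma lattice_inner_add: "lattice_inner (k + l) x = lattice_inner k x + lattice_inner l x"
  and lattice_inner_diff: "lattice_inner (k - l) x = lattice_inner k x - lattice_inner l x"
  and lattice_inner_uminus: "lattice_inner (- k) x = - lattice_inner k x"
  and lattice_inner_zero: "lattice_inner 0 x = 0"
  by (simp_all add: lattice_inner_def algebra_simps)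

lemma ek_eq_sin_cos:
  "ek k x = (if k \<in> Zplus then sin (lattice_inner k x) else cos (lattice_inner k x))"
  by (simp add: ek_def lattice_inner_def Let_def)

lemma sin_eq_cos_shift: "sin t = cos (t - pi / 2)"
  by (simp add: cos_diff)

lemma ek_eq_cos: "ek k x = cos (lattice_inner k x - (if k \<in> Zplus then pi / 2 else 0))"
  by (simp add: ek_eq_sin_cos sin_eq_cos_shift)

lemma continuous_on_ek: "continuous_on S (ek k)"
  unfolding ek_eq_cos[abs_def] lattice_inner_def by (intro continuous_intros)

text \<open>Sines and constants are the waves of phase \<open>-\<pi>/2\<close> and of frequency \<open>0\<close>; with phases,
  closure under products needs only the product-to-sum formula for cosines.\<close>

inductive trig_poly :: "(real \<times> real \<Rightarrow> real) \<Rightarrow> bool" where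
  wave: "trig_poly (\<lambda>x. c * cos (lattice_inner k x + \<phi>))"
| add: "trig_poly f \<Longrightarrow> trig_poly g \<Longrightarrow> trig_poly (\<lambda>x. f x + g x)"

lemma trig_poly_const: "trig_poly (\<lambda>_. c)"
  using trig_poly.wave[of c 0 0] by (simp add: lattice_inner_zero)

lemma trig_poly_wave_mult:
  assumes "trig_poly g"
  shows "trig_poly (\<lambda>x. c * cos (lattice_inner k x + \<phi>) * g x)"
  using assms
proof induction
  case (wave d l \<psi>)
  have product_to_sum: "c * cos a * (d * cos b) = c * d / 2 * cos (a - b) + c * d / 2 * cos (a + b)"
    for a b :: real
    by (simp add: cos_add cos_diff field_simps)
  have "(\<lambda>x. c * cos (lattice_inner k x + \<phi>) * (d * cos (lattice_inner l x + \<psi>)))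
      = (\<lambda>x. c * d / 2 * cos (lattice_inner (k - l) x + (\<phi> - \<psi>))
             + c * d / 2 * cos (lattice_inner (k + l) x + (\<phi> + \<psi>)))"
    unfolding product_to_sum by (simp add: lattice_inner_add lattice_inner_diff algebra_simps)
  then show ?case
    by (simp only:) (rule trig_poly.add[OF trig_poly.wave trig_poly.wave])
next
  case (add f g)
  then show ?case
    using trig_poly.add[OF add.IH] by (simp add: distrib_left)
qed

lemma trig_poly_mult: "trig_poly f \<Longrightarrow> trig_poly g \<Longrightarrow> trig_poly (\<lambda>x. f x * g x)"
proof (induction rule: trig_poly.induct)
  case (wave c k \<phi>)
  then show ?case by (rule trig_poly_wave_mult)
next
  case (add f1 f2)
  then show ?case
    using trig_poly.add[OF add.IH] by (simp add: distrib_right)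
qed

definition torus_embedding :: "real \<times> real \<Rightarrow> (real \<times> real) \<times> (real \<times> real)" where
  "torus_embedding x = ((cos (fst x), sin (fst x)), (cos (snd x), sin (snd x)))"

lemma continuous_on_trig_poly: "trig_poly p \<Longrightarrow> continuous_on S p"
  by (induction rule: trig_poly.induct) (auto simp: lattice_inner_def intro!: continuous_intros)

lemma continuous_on_torus_embedding: "continuous_on S torus_embedding"
  unfolding torus_embedding_def by (intro continuous_intros)

lemma trig_poly_polynomial_function:
  assumes "real_polynomial_function P"
  shows "trig_poly (\<lambda>x. P (torus_embedding x))"
  using assms
proof induction
  case (linear f)
  then interpret bounded_linear f .
  have coords: "f ((a, b), (c, d))
      = a * f ((1, 0), (0, 0)) + b * f ((0, 1), (0, 0)) + c * f ((0, 0), (1, 0)) + d * f ((0, 0), (0, 1))"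
    for a b c d
  proof -
    have "((a, b), (c, d)) = a *\<^sub>R ((1, 0), (0, 0)) + b *\<^sub>R ((0, 1), (0, 0))
                               + c *\<^sub>R ((0, 0), (1, 0)) + d *\<^sub>R ((0, 0), (0, 1))"
      by simp
    then show ?thesis
      by (simp only: add scale real_scaleR_def)
  qed
  have "f (torus_embedding x)
      = f ((1, 0), (0, 0)) * cos (lattice_inner (1, 0) x + 0)
        + f ((0, 1), (0, 0)) * cos (lattice_inner (1, 0) x + - (pi / 2))
        + f ((0, 0), (1, 0)) * cos (lattice_inner (0, 1) x + 0)
        + f ((0, 0), (0, 1)) * cos (lattice_inner (0, 1) x + - (pi / 2))" for x
    unfolding torus_embedding_def coords[of "cos (fst x)" "sin (fst x)" "cos (snd x)" "sin (snd x)"]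
    by (simp add: lattice_inner_def sin_eq_cos_shift mult.commute)
  then show ?case
    by (simp only:) (intro trig_poly.add trig_poly.wave)
next
  case (const c)
  then show ?case by (rule trig_poly_const)
next
  case (add f g)
  from add.IH show ?case by (rule trig_poly.add)
next
  case (mult f g)
  from mult.IH show ?case by (rule trig_poly_mult)
qed

lemma wave_eq_ek_combination:
  fixes c \<phi> :: real
  assumes "k \<noteq> 0"
  obtains p a b where "p \<in> Zplus" "p \<noteq> - p"
    "\<And>x. c * cos (lattice_inner k x + \<phi>) = a * ek p x + b * ek (- p) x"
proof -
  define s :: real where "s = (if k \<in> Zplus then 1 else - 1)"
  define p where "p = (if k \<in> Zplus then k else - k)"
  have p: "p \<in> Zplus" "p \<noteq> - p"
    using assms uminus_Zplus_iff[OF assms] by (auto simp: p_def)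
  have "- p \<notin> Zplus"
    using p(1) assms uminus_Zplus_iff[of p] by (auto simp: p_def)
  then have "ek p x = s * sin (lattice_inner k x)" "ek (- p) x = cos (lattice_inner k x)" for x
    using p(1) by (auto simp: ek_eq_sin_cos s_def p_def lattice_inner_uminus)
  then have "c * cos (lattice_inner k x + \<phi>)
      = (- s * c * sin \<phi>) * ek p x + (c * cos \<phi>) * ek (- p) x" for x
    by (simp add: cos_add s_def algebra_simps)
  with p show ?thesis
    using that by blast
qed

lemma sum_mult_union:
  fixes c1 c2 :: "'a \<Rightarrow> 'b::semiring_0"
  assumes "finite F1" "finite F2"
  shows "(\<Sum>k\<in>F1. c1 k * b k) + (\<Sum>k\<in>F2. c2 k * b k)
           = (\<Sum>k\<in>F1 \<union> F2. ((if k \<in> F1 then c1 k else 0) + (if k \<in> F2 then c2 k else 0)) * b k)"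
proof -
  have "(\<Sum>k\<in>F1 \<union> F2. (if k \<in> F1 then c1 k else 0) * b k) = (\<Sum>k\<in>F1. c1 k * b k)"
    "(\<Sum>k\<in>F1 \<union> F2. (if k \<in> F2 then c2 k else 0) * b k) = (\<Sum>k\<in>F2. c2 k * b k)"
    by (rule sum.mono_neutral_cong_right; use assms in auto)+
  then show ?thesis
    by (simp add: distrib_right sum.distrib)
qed

lemma trig_poly_eq_ek_sum:
  assumes "trig_poly p"
  shows "\<exists>c0 F c. finite F \<and> F \<subseteq> Zzero \<and> (\<forall>x. p x = c0 + (\<Sum>k\<in>F. c k * ek k x))"
  using assms
proof induction
  case (wave c k \<phi>)
  show ?case
  proof (cases "k = 0")
    case True
    then show ?thesis
      by (intro exI[of _ "c * cos \<phi>"] exI[of _ "{}"]) (simp add: lattice_inner_zero)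
  next
    case False
    then obtain q a b where q: "q \<in> Zplus" "q \<noteq> - q"
      and eq: "\<And>x. c * cos (lattice_inner k x + \<phi>) = a * ek q x + b * ek (- q) x"
      using wave_eq_ek_combination[OF False, where c = c and \<phi> = \<phi>] by blast
    have "{q, - q} \<subseteq> Zzero"
      using q by (auto simp: Zzero_def Zminus_def)
    with q show ?thesis
      by (intro exI[of _ 0] exI[of _ "{q, - q}"] exI[of _ "\<lambda>j. if j = q then a else b"])
        (simp add: eq)
  qed
next
  case (add f g)
  from add.IH(1) obtain c1 F1 d1 where F1: "finite F1" "F1 \<subseteq> Zzero"
    and f: "\<forall>x. f x = c1 + (\<Sum>k\<in>F1. d1 k * ek k x)"
    by blast
  from add.IH(2) obtain c2 F2 d2 where F2: "finite F2" "F2 \<subseteq> Zzero"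
    and g: "\<forall>x. g x = c2 + (\<Sum>k\<in>F2. d2 k * ek k x)"
    by blast
  define d where "d k = (if k \<in> F1 then d1 k else 0) + (if k \<in> F2 then d2 k else 0)" for k
  have "f x + g x = (c1 + c2) + (\<Sum>k\<in>F1 \<union> F2. d k * ek k x)" for x
    unfolding d_def sum_mult_union[OF F1(1) F2(1), symmetric] f[rule_format] g[rule_format]
    by (simp add: algebra_simps)
  with F1 F2 show ?case
    by (intro exI[of _ "c1 + c2"] exI[of _ "F1 \<union> F2"] exI[of _ d]) auto
qed

section \<open>Density of the modes in the mean-zero functions\<close>

lemma torus_box_eq_cbox: "torus_box = cbox (0, 0) (2 * pi, 2 * pi)"
  by (simp add: torus_box_def cbox_Pair_eq)

lemma compact_torus_box: "compact torus_box"
  by (simp add: torus_box_eq_cbox)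

lemma torus_box_lmeasurable: "torus_box \<in> lmeasurable"
  unfolding torus_box_eq_cbox by (rule lmeasurable_cbox)

lemma sets_torus_box: "torus_box \<in> sets lebesgue"
  and emeasure_torus_box: "emeasure lebesgue torus_box < \<infinity>"
  using torus_box_lmeasurable by (auto simp: fmeasurable_def)

lemma integral_cos_int_multiple:
  fixes m :: int
  assumes "m \<noteq> 0"
  shows "integral {0..2 * pi} (\<lambda>t. cos (of_int m * t + \<phi>)) = 0"
proof -
  let ?F = "\<lambda>t. sin (of_int m * t + \<phi>) / of_int m"
  have "((\<lambda>t. cos (of_int m * t + \<phi>)) has_integral (?F (2 * pi) - ?F 0)) {0..2 * pi}"
  proof (rule fundamental_theorem_of_calculus)
    fix t :: real
    have "(?F has_real_derivative cos (of_int m * t + \<phi>)) (at t within {0..2 * pi})"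
      using assms by (auto intro!: derivative_eq_intros)
    then show "(?F has_vector_derivative cos (of_int m * t + \<phi>)) (at t within {0..2 * pi})"
      by (simp add: has_real_derivative_iff_has_vector_derivative)
  qed simp
  moreover have "?F (2 * pi) = ?F 0"
    using sin_int_2pin[of m] cos_int_2pin[of m] by (simp add: sin_add mult.commute)
  ultimately show ?thesis
    by (simp add: integral_unique)
qed

lemma integral_torus_box_wave:
  assumes "k \<noteq> 0"
  shows "integral torus_box (\<lambda>x. cos (lattice_inner k x + \<phi>)) = 0"
proof -
  obtain k1 k2 where k: "k = (k1, k2)"
    by (cases k)
  have "integral torus_box (\<lambda>x. cos (lattice_inner k x + \<phi>))
      = integral {0..2 * pi} (\<lambda>s. integral {0..2 * pi} (\<lambda>t. cos (of_int k2 * t + (of_int k1 * s + \<phi>))))"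
    unfolding torus_box_eq_cbox
    by (subst integral_prod_continuous) (auto intro!: continuous_intros simp: lattice_inner_def k add_ac)
  also have "\<dots> = 0"
  proof (cases "k2 = 0")
    case True
    then have "k1 \<noteq> 0"
      using assms k by (simp add: zero_prod_def)
    with True show ?thesis
      using integral_cos_int_multiple[of k1 \<phi>] by simp
  next
    case False
    then show ?thesis
      by (simp add: integral_cos_int_multiple)
  qed
  finally show ?thesis .
qed

lemma integral_torus_box_ek_sum:
  assumes "finite F" "F \<subseteq> Zzero"
  shows "(LINT x:torus_box|lebesgue. (\<Sum>k\<in>F. c k * ek k x)) = 0"
proof -
  have "integral torus_box (ek k) = 0" if "k \<in> F" for k
  proof -
    have "k \<noteq> 0"
      using that assms(2) Zzero_iff by blast
    have "ek k = (\<lambda>x. cos (lattice_inner k x + - (if k \<in> Zplus then pi / 2 else 0)))"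
      by (simp add: ek_eq_cos[abs_def])
    with integral_torus_box_wave[OF \<open>k \<noteq> 0\<close>] show ?thesis
      by (simp only:)
  qed
  then have "integral torus_box (\<lambda>x. \<Sum>k\<in>F. c k * ek k x) = 0"
    using assms(1) unfolding torus_box_eq_cbox
    by (subst integral_sum) (auto intro!: integrable_continuous continuous_intros continuous_on_ek sum.neutral)
  moreover have "set_integrable lebesgue torus_box (\<lambda>x. \<Sum>k\<in>F. c k * ek k x)"
    unfolding torus_box_eq_cbox by (intro absolutely_integrable_continuous continuous_intros continuous_on_ek)
  ultimately show ?thesis
    by (simp add: set_lebesgue_integral_eq_integral)
qed

lemma continuous_on_imp_set_borel_measurable:
  fixes f :: "'a::euclidean_space \<Rightarrow> real"
  assumes "continuous_on S f" "S \<in> sets lebesgue"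
  shows "set_borel_measurable lebesgue S f"
  using continuous_imp_measurable_on_sets_lebesgue[OF assms] assms(2)
  unfolding set_borel_measurable_def by (subst (asm) borel_measurable_restrict_space_iff) auto

lemma square_integrable_on_continuous:
  fixes u :: "'a::euclidean_space \<Rightarrow> real"
  assumes "compact S" "continuous_on S u"
  shows "square_integrable_on lebesgue S u"
proof -
  have S: "S \<in> sets lebesgue" "emeasure lebesgue S < \<infinity>"
    using lmeasurable_compact[OF assms(1)] by (auto simp: fmeasurable_def)
  obtain C where "\<And>x. x \<in> S \<Longrightarrow> \<bar>u x\<bar> \<le> C"
    using compact_imp_bounded[OF compact_continuous_image[OF assms(2,1)]]
    by (auto simp: bounded_iff)
  then show ?thesis
    using square_integrable_on_bounded(1)[OF S continuous_on_imp_set_borel_measurable[OF assms(2) S(1)]]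
    by blast
qed

lemma set_borel_measurable_AE_continuous_limit:
  fixes g :: "'a::euclidean_space \<Rightarrow> real"
  assumes "S \<in> sets lebesgue" "set_borel_measurable lebesgue S g"
  obtains gs where "\<And>n. continuous_on UNIV (gs n)"
    "AE x in lebesgue. x \<in> S \<longrightarrow> (\<lambda>n. gs n x) \<longlonglongrightarrow> g x"
proof -
  have "(\<lambda>x. indicator S x *\<^sub>R g x) measurable_on S"
    using assms by (intro lebesgue_measurable_imp_measurable_on) (simp_all add: set_borel_measurable_def)
  then obtain N gs where "negligible N" "\<And>n. continuous_on UNIV (gs n)"
    and lim: "\<And>x. x \<notin> N \<Longrightarrow> (\<lambda>n. gs n x) \<longlonglongrightarrow> (if x \<in> S then indicator S x *\<^sub>R g x else 0)"
    unfolding measurable_on_def by blast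
  moreover have "(\<lambda>n. gs n x) \<longlonglongrightarrow> g x" if "x \<in> S" "x \<notin> N" for x
    using lim[OF that(2)] that(1) by simp
  then have "AE x in lebesgue. x \<in> S \<longrightarrow> (\<lambda>n. gs n x) \<longlonglongrightarrow> g x"
    using \<open>negligible N\<close> by (intro AE_I'[of N]) (auto simp: negligible_iff_null_sets)
  ultimately show ?thesis
    using that by blast
qed

definition torus_seams :: "(real \<times> real) set" where
  "torus_seams = {x. fst x \<in> {0, 2 * pi} \<or> snd x \<in> {0, 2 * pi}}"

lemma negligible_torus_seams: "negligible torus_seams"
proof -
  have seams_eq: "torus_seams = {x. (1, 0) \<bullet> x = 0} \<union> {x. (1, 0) \<bullet> x = 2 * pi}
                       \<union> {x. (0, 1) \<bullet> x = 0} \<union> {x. (0, 1) \<bullet> x = 2 * pi}"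
    by (auto simp: torus_seams_def inner_prod_def)
  show ?thesis
    unfolding seams_eq by (intro negligible_Un negligible_hyperplane; simp add: zero_prod_def)
qed

definition edge_cutoff :: "nat \<Rightarrow> real \<Rightarrow> real" where
  "edge_cutoff n t = max 0 (min 1 (real (Suc n) * min t (2 * pi - t)))"

lemma continuous_on_edge_cutoff: "continuous_on S (edge_cutoff n)"
  unfolding edge_cutoff_def by (intro continuous_intros)

lemma edge_cutoff_bounds: "0 \<le> edge_cutoff n t" "edge_cutoff n t \<le> 1"
  by (simp_all add: edge_cutoff_def)

lemma edge_cutoff_ends: "t \<in> {0, 2 * pi} \<Longrightarrow> edge_cutoff n t = 0"
  by (auto simp: edge_cutoff_def)

lemma edge_cutoff_tendsto:
  assumes "0 < t" "t < 2 * pi"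
  shows "(\<lambda>n. edge_cutoff n t) \<longlonglongrightarrow> 1"
proof (rule tendsto_eventually)
  define m where "m = min t (2 * pi - t)"
  have "m > 0"
    using assms by (simp add: m_def)
  obtain N :: nat where "1 / m \<le> real N"
    using real_arch_simple by blast
  then have "1 \<le> real N * m"
    using \<open>m > 0\<close> by (simp add: field_simps)
  have "edge_cutoff n t = 1" if "n \<ge> N" for n
  proof -
    have "real N * m \<le> real (Suc n) * m"
      using that \<open>m > 0\<close> by (intro mult_right_mono) auto
    with \<open>1 \<le> real N * m\<close> have "1 \<le> real (Suc n) * m"
      by linarith
    then show ?thesis
      by (simp add: edge_cutoff_def m_def[symmetric] min_absorb1)
  qed
  then show "eventually (\<lambda>n. edge_cutoff n t = 1) sequentially"
    by (auto simp: eventually_sequentially)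
qed

lemma edge_cutoffs_tendsto:
  assumes "x \<in> torus_box" "x \<notin> torus_seams"
  shows "(\<lambda>n. edge_cutoff n (fst x) * edge_cutoff n (snd x)) \<longlonglongrightarrow> 1"
proof -
  have "0 < fst x" "fst x < 2 * pi" "0 < snd x" "snd x < 2 * pi"
    using assms by (auto simp: torus_box_def torus_seams_def less_eq_real_def)
  then show ?thesis
    using tendsto_mult[OF edge_cutoff_tendsto edge_cutoff_tendsto] by simp
qed

lemma AE_edge_cutoff_clip_tendsto:
  assumes "AE x in lebesgue. x \<in> torus_box \<longrightarrow> (\<lambda>n. gs n x) \<longlonglongrightarrow> g x"
    and bound: "\<And>x. x \<in> torus_box \<Longrightarrow> \<bar>g x\<bar> \<le> C"
  shows "AE x in lebesgue. x \<in> torus_box \<longrightarrow>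
           (\<lambda>n. edge_cutoff n (fst x) * edge_cutoff n (snd x) * clip C (gs n x)) \<longlonglongrightarrow> g x"
proof -
  have "AE x in lebesgue. x \<notin> torus_seams"
    using negligible_torus_seams by (intro AE_I'[of torus_seams]) (auto simp: negligible_iff_null_sets)
  then show ?thesis
    using assms(1)
  proof eventually_elim
    case (elim x)
    show ?case
    proof
      assume x: "x \<in> torus_box"
      have "(\<lambda>n. clip C (gs n x)) \<longlonglongrightarrow> clip C (g x)"
        using elim(2) x continuous_on_clip[of UNIV C]
        by (auto intro: continuous_on_tendsto_compose)
      from tendsto_mult[OF edge_cutoffs_tendsto[OF x elim(1)] this]
      show "(\<lambda>n. edge_cutoff n (fst x) * edge_cutoff n (snd x) * clip C (gs n x)) \<longlonglongrightarrow> g x"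
        using clip_eq_self[OF bound[OF x]] by simp
    qed
  qed
qed

lemma bounded_approx_continuous_vanishing_on_seams:
  assumes g: "set_borel_measurable lebesgue torus_box g"
    and bound: "\<And>x. x \<in> torus_box \<Longrightarrow> \<bar>g x\<bar> \<le> C" and "0 \<le> C" "0 < e"
  obtains h where "continuous_on UNIV h" "\<And>x. x \<in> torus_seams \<Longrightarrow> h x = 0"
    "sq_norm_on lebesgue torus_box (\<lambda>x. g x - h x) < e"
proof -
  obtain gs where gs_cont: "\<And>n. continuous_on UNIV (gs n)"
    and gs_lim: "AE x in lebesgue. x \<in> torus_box \<longrightarrow> (\<lambda>n. gs n x) \<longlonglongrightarrow> g x"
    using set_borel_measurable_AE_continuous_limit[OF sets_torus_box g] by blast
  define u where "u n x = edge_cutoff n (fst x) * edge_cutoff n (snd x) * clip C (gs n x)" for n x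
  have u_cont: "continuous_on UNIV (u n)" for n
    unfolding u_def
    by (intro continuous_intros continuous_on_compose2[OF continuous_on_edge_cutoff]
        continuous_on_compose2[OF continuous_on_clip gs_cont]) auto
  have u_bound: "\<bar>u n x\<bar> \<le> C" for n x
  proof -
    have "\<bar>u n x\<bar> \<le> 1 * 1 * C"
      unfolding u_def abs_mult
      using edge_cutoff_bounds clip_abs_le(1)[OF \<open>0 \<le> C\<close>] by (intro mult_mono) auto
    then show ?thesis by simp
  qed
  have u_lim: "AE x in lebesgue. x \<in> torus_box \<longrightarrow> (\<lambda>n. u n x) \<longlonglongrightarrow> g x"
    unfolding u_def using gs_lim bound by (rule AE_edge_cutoff_clip_tendsto)
  have "(\<lambda>n. sq_norm_on lebesgue torus_box (\<lambda>x. g x - u n x)) \<longlonglongrightarrow> 0"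
  proof (rule sq_norm_on_dominated_convergence[OF _ g _ _ _ u_lim])
    show "set_borel_measurable lebesgue torus_box (u n)" for n
      using u_cont continuous_on_subset sets_torus_box
      by (blast intro: continuous_on_imp_set_borel_measurable)
    show "square_integrable_on lebesgue torus_box (\<lambda>_. C)"
      by (rule square_integrable_on_continuous[OF compact_torus_box]) simp
  qed (use u_bound bound in auto)
  then obtain n where "sq_norm_on lebesgue torus_box (\<lambda>x. g x - u n x) < e"
    using \<open>0 < e\<close> by (rule LIMSEQ_zero_ex_less)
  moreover have "u n x = 0" if "x \<in> torus_seams" for x
    using that by (auto simp: u_def torus_seams_def edge_cutoff_ends)
  ultimately show ?thesis
    using that u_cont by blast
qed

lemma cos_sin_eq_imp_eq_or_ends:
  fixes a b :: real
  assumes "a \<in> {0..2 * pi}" "b \<in> {0..2 * pi}" "cos a = cos b" "sin a = sin b"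
  shows "a = b \<or> (a \<in> {0, 2 * pi} \<and> b \<in> {0, 2 * pi})"
proof -
  obtain n :: int where n: "a = b + 2 * pi * n"
    using sin_cos_eq_iff assms(3,4) by metis
  have bounds: "0 \<le> a" "a \<le> 2 * pi" "0 \<le> b" "b \<le> 2 * pi"
    using assms(1,2) by auto
  consider "n = 0" | "n \<ge> 1" | "n \<le> -1"
    by linarith
  then show ?thesis
  proof cases
    case 2
    then have "2 * pi * 1 \<le> 2 * pi * n"
      by (intro mult_left_mono) auto
    then have "a = 2 * pi \<and> b = 0"
      using n bounds by linarith
    then show ?thesis
      by simp
  next
    case 3
    then have "2 * pi * n \<le> 2 * pi * (- 1)"
      by (intro mult_left_mono) auto
    then have "a = 0 \<and> b = 2 * pi"
      using n bounds by linarith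
    then show ?thesis
      by simp
  qed (use n in simp)
qed

lemma torus_embedding_eq_imp_eq_or_seams:
  assumes "x \<in> torus_box" "y \<in> torus_box" "torus_embedding x = torus_embedding y"
  shows "x = y \<or> (x \<in> torus_seams \<and> y \<in> torus_seams)"
proof -
  have trig: "cos (fst x) = cos (fst y)" "sin (fst x) = sin (fst y)"
    "cos (snd x) = cos (snd y)" "sin (snd x) = sin (snd y)"
    using assms(3) by (simp_all add: torus_embedding_def)
  have range: "fst x \<in> {0..2 * pi}" "snd x \<in> {0..2 * pi}" "fst y \<in> {0..2 * pi}" "snd y \<in> {0..2 * pi}"
    using assms(1,2) by (auto simp: torus_box_def)
  have "fst x = fst y \<or> (fst x \<in> {0, 2 * pi} \<and> fst y \<in> {0, 2 * pi})"
    "snd x = snd y \<or> (snd x \<in> {0, 2 * pi} \<and> snd y \<in> {0, 2 * pi})"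
    using cos_sin_eq_imp_eq_or_ends[OF range(1,3) trig(1,2)]
      cos_sin_eq_imp_eq_or_ends[OF range(2,4) trig(3,4)] .
  then show ?thesis
    unfolding torus_seams_def prod_eq_iff by blast
qed

text \<open>The descended function is continuous because the preimage of a closed set is the image
  of a compact set under the embedding.\<close>

lemma vanishing_on_seams_factor_torus_embedding:
  fixes h :: "real \<times> real \<Rightarrow> real"
  assumes h_cont: "continuous_on torus_box h" and h_seams: "\<And>x. x \<in> torus_seams \<Longrightarrow> h x = 0"
  obtains H where "continuous_on (torus_embedding ` torus_box) H"
    "\<And>x. x \<in> torus_box \<Longrightarrow> H (torus_embedding x) = h x"
proof -
  let ?T = "torus_embedding ` torus_box"
  define H where "H p = h (SOME x. x \<in> torus_box \<and> torus_embedding x = p)" for p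
  have H: "H (torus_embedding x) = h x" if "x \<in> torus_box" for x
  proof -
    define y where "y = (SOME y. y \<in> torus_box \<and> torus_embedding y = torus_embedding x)"
    have "y \<in> torus_box \<and> torus_embedding y = torus_embedding x"
      unfolding y_def
      by (rule someI[of "\<lambda>y. y \<in> torus_box \<and> torus_embedding y = torus_embedding x" x]) (simp add: that)
    then have "y = x \<or> (y \<in> torus_seams \<and> x \<in> torus_seams)"
      using torus_embedding_eq_imp_eq_or_seams[of y x] that by blast
    moreover have "H (torus_embedding x) = h y"
      by (simp add: H_def y_def)
    ultimately show ?thesis
      using h_seams[of x] h_seams[of y] by auto
  qed
  have "continuous_on ?T H"
  proof (subst continuous_on_closed_vimage[OF compact_imp_closed[OF compact_continuous_image[OF
          continuous_on_torus_embedding compact_torus_box]]], intro allI impI)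
    fix C :: "real set"
    assume "closed C"
    then have "closed (torus_box \<inter> h -` C)"
      using h_cont compact_torus_box by (simp add: continuous_closed_preimage compact_imp_closed)
    then have "compact (torus_box \<inter> h -` C \<inter> torus_box)"
      using compact_torus_box by (rule closed_Int_compact)
    then have "compact (torus_box \<inter> h -` C)"
      by (simp add: Int_absorb2)
    then have "compact (torus_embedding ` (torus_box \<inter> h -` C))"
      by (rule compact_continuous_image[OF continuous_on_torus_embedding])
    moreover have "H -` C \<inter> ?T = torus_embedding ` (torus_box \<inter> h -` C)"
      using H by (auto simp: image_iff)
    ultimately show "closed (H -` C \<inter> ?T)"
      by (simp add: compact_imp_closed)
  qed
  with H show ?thesis
    using that by blast
qed

lemma continuous_vanishing_on_seams_uniform_approx:
  assumes "continuous_on torus_box h" "\<And>x. x \<in> torus_seams \<Longrightarrow> h x = 0" "0 < e"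
  obtains P where "real_polynomial_function P"
    "\<And>x. x \<in> torus_box \<Longrightarrow> \<bar>h x - P (torus_embedding x)\<bar> < e"
proof -
  obtain H where H_cont: "continuous_on (torus_embedding ` torus_box) H"
    and H: "\<And>x. x \<in> torus_box \<Longrightarrow> H (torus_embedding x) = h x"
    using vanishing_on_seams_factor_torus_embedding[OF assms(1,2)] by blast
  obtain P where "polynomial_function P" "\<forall>p \<in> torus_embedding ` torus_box. norm (H p - P p) < e"
    using Stone_Weierstrass_polynomial_function[OF compact_continuous_image[OF
        continuous_on_torus_embedding compact_torus_box] H_cont \<open>0 < e\<close>] by blast
  moreover have "real_polynomial_function P"
    using \<open>polynomial_function P\<close> by (simp add: real_polynomial_function_eq)
  ultimately show ?thesis
    using that H by force
qed

lemma continuous_vanishing_on_seams_approx_trig_poly: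
  assumes "continuous_on torus_box h" "\<And>x. x \<in> torus_seams \<Longrightarrow> h x = 0" "0 < e"
  obtains p where "trig_poly p" "sq_norm_on lebesgue torus_box (\<lambda>x. h x - p x) < e"
proof -
  define \<mu> where "\<mu> = measure lebesgue torus_box"
  define \<eta> where "\<eta> = sqrt (e / (\<mu> + 1))"
  have "\<mu> \<ge> 0" "\<eta> > 0"
    using \<open>0 < e\<close> by (simp_all add: \<mu>_def \<eta>_def add_nonneg_pos)
  obtain P where P: "real_polynomial_function P"
    and close: "\<And>x. x \<in> torus_box \<Longrightarrow> \<bar>h x - P (torus_embedding x)\<bar> < \<eta>"
    using continuous_vanishing_on_seams_uniform_approx[OF assms(1,2) \<open>\<eta> > 0\<close>] by blast
  let ?p = "\<lambda>x. P (torus_embedding x)"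
  have p: "trig_poly ?p"
    using P by (rule trig_poly_polynomial_function)
  have "set_borel_measurable lebesgue torus_box (\<lambda>x. h x - ?p x)"
    using assms(1) continuous_on_trig_poly[OF p] sets_torus_box
    by (intro continuous_on_imp_set_borel_measurable continuous_intros)
  then have "sq_norm_on lebesgue torus_box (\<lambda>x. h x - ?p x) \<le> \<eta>\<^sup>2 * \<mu>"
    using square_integrable_on_bounded(2)[OF sets_torus_box emeasure_torus_box] close less_imp_le
    unfolding \<mu>_def by blast
  also have "\<dots> = e * (\<mu> / (\<mu> + 1))"
    using \<open>0 < e\<close> \<open>\<mu> \<ge> 0\<close> by (simp add: \<eta>_def)
  also have "\<dots> < e"
    using \<open>0 < e\<close> \<open>\<mu> \<ge> 0\<close> by (simp add: mult_less_cancel_left1 field_simps)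
  finally show ?thesis
    using that p by blast
qed

lemma square_integrable_on_torus_box_approx_trig_poly:
  assumes f: "square_integrable_on lebesgue torus_box f" and "0 < e"
  obtains p where "trig_poly p" "sq_norm_on lebesgue torus_box (\<lambda>x. f x - p x) < e"
proof -
  have fm: "set_borel_measurable lebesgue torus_box f"
    using f by (simp add: square_integrable_on_def)
  obtain C where "0 \<le> C" and fg: "sq_norm_on lebesgue torus_box (\<lambda>x. f x - clip C (f x)) < e / 4"
    using square_integrable_on_clip_approx[OF f] \<open>0 < e\<close> by (metis divide_pos_pos zero_less_numeral)
  define g where "g x = clip C (f x)" for x
  have gm: "set_borel_measurable lebesgue torus_box g"
    unfolding g_def using set_borel_measurable_clip[OF \<open>0 \<le> C\<close> fm] .
  have g_bound: "\<And>x. x \<in> torus_box \<Longrightarrow> \<bar>g x\<bar> \<le> C"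
    unfolding g_def using clip_abs_le(1)[OF \<open>0 \<le> C\<close>] .
  obtain h where h_cont: "continuous_on UNIV h" and h_seams: "\<And>x. x \<in> torus_seams \<Longrightarrow> h x = 0"
    and gh: "sq_norm_on lebesgue torus_box (\<lambda>x. g x - h x) < e / 16"
    using bounded_approx_continuous_vanishing_on_seams[OF gm g_bound \<open>0 \<le> C\<close>, of "e / 16"] \<open>0 < e\<close>
    by auto
  obtain p where p: "trig_poly p" and hp: "sq_norm_on lebesgue torus_box (\<lambda>x. h x - p x) < e / 16"
    using continuous_vanishing_on_seams_approx_trig_poly[OF continuous_on_subset[OF h_cont] h_seams,
        of "e / 16"] \<open>0 < e\<close> by auto
  have sq_int: "square_integrable_on lebesgue torus_box g" "square_integrable_on lebesgue torus_box h"
    "square_integrable_on lebesgue torus_box p"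
    using square_integrable_on_bounded(1)[OF sets_torus_box emeasure_torus_box gm g_bound]
      square_integrable_on_continuous[OF compact_torus_box] continuous_on_subset[OF h_cont]
      continuous_on_trig_poly[OF p] by auto
  have "sq_norm_on lebesgue torus_box (\<lambda>x. f x - p x)
      \<le> 2 * sq_norm_on lebesgue torus_box (\<lambda>x. f x - g x) + 2 * sq_norm_on lebesgue torus_box (\<lambda>x. g x - p x)"
    using sq_norm_on_diff_le[OF f sq_int(1,3)] .
  moreover have "sq_norm_on lebesgue torus_box (\<lambda>x. g x - p x)
      \<le> 2 * sq_norm_on lebesgue torus_box (\<lambda>x. g x - h x) + 2 * sq_norm_on lebesgue torus_box (\<lambda>x. h x - p x)"
    using sq_norm_on_diff_le[OF sq_int] .
  ultimately have "sq_norm_on lebesgue torus_box (\<lambda>x. f x - p x) < e"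
    using fg gh hp unfolding g_def by linarith
  with p show ?thesis
    using that by blast
qed

lemma L2zero_sq_norm_ek_sum_le:
  assumes f: "f \<in> L2zero" and F: "finite F" "F \<subseteq> Zzero"
  shows "sq_norm_on lebesgue torus_box (\<lambda>x. f x - (\<Sum>k\<in>F. c k * ek k x))
           \<le> sq_norm_on lebesgue torus_box (\<lambda>x. f x - (c0 + (\<Sum>k\<in>F. c k * ek k x)))"
proof -
  define r where "r x = f x - (\<Sum>k\<in>F. c k * ek k x)" for x
  have f_sq: "square_integrable_on lebesgue torus_box f"
    using f by (simp add: L2zero_def square_integrable_on_def)
  have sum_cont: "continuous_on torus_box (\<lambda>x. \<Sum>k\<in>F. c k * ek k x)"
    by (intro continuous_intros continuous_on_ek)
  have "square_integrable_on lebesgue torus_box r"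
    unfolding r_def
    by (intro square_integrable_on_diff f_sq square_integrable_on_continuous compact_torus_box sum_cont)
  moreover have "(LINT x:torus_box|lebesgue. r x) = 0"
  proof -
    have "(LINT x:torus_box|lebesgue. r x)
        = (LINT x:torus_box|lebesgue. f x) - (LINT x:torus_box|lebesgue. (\<Sum>k\<in>F. c k * ek k x))"
      unfolding r_def
      using square_integrable_on_imp_set_integrable[OF sets_torus_box emeasure_torus_box f_sq]
        absolutely_integrable_continuous[OF sum_cont[unfolded torus_box_eq_cbox]]
      unfolding torus_box_eq_cbox by (rule set_integral_diff(2))
    then show ?thesis
      using f integral_torus_box_ek_sum[OF F] by (simp add: L2zero_def)
  qed
  ultimately have "sq_norm_on lebesgue torus_box r \<le> sq_norm_on lebesgue torus_box (\<lambda>x. r x - c0)"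
    by (rule sq_norm_on_le_diff_const[OF sets_torus_box emeasure_torus_box])
  then show ?thesis
    by (simp add: r_def algebra_simps)
qed

lemma L2zero_approx_ek_sum:
  assumes f: "f \<in> L2zero" and "0 < e"
  obtains F c where "finite F" "F \<subseteq> Zzero"
    "sq_norm_on lebesgue torus_box (\<lambda>x. f x - (\<Sum>k\<in>F. c k * ek k x)) < e"
proof -
  have "square_integrable_on lebesgue torus_box f"
    using f by (simp add: L2zero_def square_integrable_on_def)
  then obtain p where "trig_poly p" and fp: "sq_norm_on lebesgue torus_box (\<lambda>x. f x - p x) < e"
    using \<open>0 < e\<close> by (rule square_integrable_on_torus_box_approx_trig_poly)
  obtain c0 F c where F: "finite F" "F \<subseteq> Zzero" and p: "\<forall>x. p x = c0 + (\<Sum>k\<in>F. c k * ek k x)"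
    using trig_poly_eq_ek_sum[OF \<open>trig_poly p\<close>] by blast
  have "sq_norm_on lebesgue torus_box (\<lambda>x. f x - (\<Sum>k\<in>F. c k * ek k x))
      \<le> sq_norm_on lebesgue torus_box (\<lambda>x. f x - p x)"
    unfolding p[rule_format] by (rule L2zero_sq_norm_ek_sum_le[OF f F])
  with fp have "sq_norm_on lebesgue torus_box (\<lambda>x. f x - (\<Sum>k\<in>F. c k * ek k x)) < e"
    by linarith
  with F show ?thesis
    by (rule that)
qed

theorem proposition3p2:
  fixes Zs :: "(int \<times> int) set"
  assumes "finite Zs" and "Zs \<subseteq> Zzero"
    and "{(0, 1), (1, 1)} \<subseteq> Z0 Zs"
  shows "S_infty Zs = L2zero"
proof -
  have Zzero: "Zzero \<subseteq> Zinf Zs \<union> Zs"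
    using Zzero_subset_Zinf[OF assms(3)] by blast
  have "f \<in> S_infty Zs" if f: "f \<in> L2zero" for f
    unfolding S_infty_def L2_closed_span_def
  proof (intro CollectI conjI allI impI f)
    fix \<epsilon> :: real
    assume "0 < \<epsilon>"
    then obtain F c where "finite F" "F \<subseteq> Zzero"
      "(LINT x:torus_box|lebesgue. (f x - (\<Sum>k\<in>F. c k * ek k x))\<^sup>2) < \<epsilon>"
      by (rule L2zero_approx_ek_sum[OF f])
    with Zzero show "\<exists>F c. finite F \<and> F \<subseteq> Zinf Zs \<union> Zs \<and>
        (LINT x:torus_box|lebesgue. (f x - (\<Sum>k\<in>F. c k * ek k x))\<^sup>2) < \<epsilon>"
      by blast
  qed
  then show ?thesis
    by (auto simp: S_infty_def L2_closed_span_def)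
qed

end
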